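(* For all $(k,l,m)\in\mathbb{Z}^3$, $$R(k,l,m;a,b,c;x)=\frac{c(c+1)}{(a+1)(b+1)x(1-x)}\,Q(k-1,l-1,m-1;a+1,b+1,c+1;x).$$
   Context: $F(a,b,c;x)=\sum_{n\ge0}\frac{(a)_n(b)_n}{(c)_n n!}x^n$, $(\alpha)_n=\Gamma(\alpha+n)/\Gamma(\alpha)$. Standing assumption: $a,b,c-a,c-b,c,c-a-b,a-b\notin\mathbb{Z}$. For each $(k,l,m)\in\mathbb{Z}^3$, $Q(k,l,m;a,b,c;x)$ and $R(k,l,m;a,b,c;x)$ denote the unique rational functions of $a,b,c,x$ such that $F(a+k,b+l,c+m;x)=Q\cdot F(a+1,b+1,c+1;x)+R\cdot F(a,b,c;x)$; $Q(k,l,m;\alpha_1,\alpha_2,\alpha_3;\beta)$ denotes substitution of $a,b,c,x$ by $\alpha_1,\alpha_2,\alpha_3,\beta$. *)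

theory Defs
  imports "HOL-Analysis.Analysis" "HOL-Computational_Algebra.Computational_Algebra" "HOL-Computational_Algebra.Field_as_Ring"
begin

definition hyp2f1 :: "complex \<Rightarrow> complex \<Rightarrow> complex \<Rightarrow> complex \<Rightarrow> complex" where
  "hyp2f1 a b c x =
     (\<Sum>n. pochhammer a n * pochhammer b n / (pochhammer c n * fact n) * x ^ n)"

type_synonym ratfun = "complex poly fract"

definition rf_num :: "ratfun \<Rightarrow> complex poly" where
  "rf_num r = fst (quot_of_fract r)"

definition rf_den :: "ratfun \<Rightarrow> complex poly" where
  "rf_den r = snd (quot_of_fract r)"

definition rf_eval :: "ratfun \<Rightarrow> complex \<Rightarrow> complex" where
  "rf_eval r x = poly (rf_num r) x / poly (rf_den r) x"

definition standing :: "complex \<Rightarrow> complex \<Rightarrow> complex \<Rightarrow> bool" where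
  "standing a b c \<longleftrightarrow> a \<notin> \<int> \<and> b \<notin> \<int> \<and> c - a \<notin> \<int> \<and> c - b \<notin> \<int> \<and> c \<notin> \<int>
      \<and> c - a - b \<notin> \<int> \<and> a - b \<notin> \<int>"

definition is_contig_decomp ::
  "int \<Rightarrow> int \<Rightarrow> int \<Rightarrow> complex \<Rightarrow> complex \<Rightarrow> complex \<Rightarrow> ratfun \<times> ratfun \<Rightarrow> bool" where
  "is_contig_decomp k l m a b c QR \<longleftrightarrow>
     (\<forall>x. norm x < 1 \<longrightarrow> poly (rf_den (fst QR)) x \<noteq> 0 \<longrightarrow> poly (rf_den (snd QR)) x \<noteq> 0 \<longrightarrow>
        hyp2f1 (a + of_int k) (b + of_int l) (c + of_int m) x =
          rf_eval (fst QR) x * hyp2f1 (a + 1) (b + 1) (c + 1) x + rf_eval (snd QR) x * hyp2f1 a b c x)"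

definition contigQ :: "int \<Rightarrow> int \<Rightarrow> int \<Rightarrow> complex \<Rightarrow> complex \<Rightarrow> complex \<Rightarrow> ratfun" where
  "contigQ k l m a b c = fst (THE QR. is_contig_decomp k l m a b c QR)"

definition contigR :: "int \<Rightarrow> int \<Rightarrow> int \<Rightarrow> complex \<Rightarrow> complex \<Rightarrow> complex \<Rightarrow> ratfun" where
  "contigR k l m a b c = snd (THE QR. is_contig_decomp k l m a b c QR)"

end

theory Submission
  imports Defs
begin

text \<open>Both sides are read off from the unique representation
  \<open>F(a+k,b+l,c+m) = Q F(a+1,b+1,c+1) + R F(a,b,c)\<close> with \<open>Q, R \<in> \<complex>(x)\<close>.
  Existence: by the contiguous relations every \<open>F(a+k,b+l,c+m)\<close> is a \<open>\<complex>(x)\<close>-combination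
  of \<open>F\<close> and \<open>F'\<close>, and \<open>F'\<close> is a constant multiple of \<open>F(a+1,b+1,c+1)\<close>.
  Uniqueness: \<open>F\<close> and \<open>F'\<close> are independent over \<open>\<complex>(x)\<close>, for otherwise \<open>F'/F\<close> would be a rational
  solution of the Riccati equation attached to the hypergeometric equation, and its residues
  and its behaviour at infinity are incompatible with the non-integrality assumptions.
  The hypergeometric equation itself reads
  \<open>(a+1)(b+1) x(1-x) F(a+2,b+2,c+2) = (c+1)((a+b+1)x - c) F(a+1,b+1,c+1) + c(c+1) F(a,b,c)\<close>;
  substituting it into the decomposition of \<open>F(a+k,b+l,c+m)\<close> with respect to
  \<open>F(a+2,b+2,c+2), F(a+1,b+1,c+1)\<close> yields the decomposition with respect to
  \<open>F(a+1,b+1,c+1), F(a,b,c)\<close>, and its second coefficient is the claimed one.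
  All identities are proved for formal power series and transferred to the unit disc,
  where the series converge.\<close>

abbreviation fp :: "complex poly \<Rightarrow> complex fps" where "fp \<equiv> fps_of_poly"

lemma fp_eq_0_iff: "fp p = 0 \<longleftrightarrow> p = 0"
  using fps_of_poly_eq_iff[of p 0] by simp

lemma fp_const: "fp [:u:] = fps_const u"
  by (simp add: fps_of_poly_const)

lemma fp_linear: "fp [:u, v:] = fps_const u + fps_const v * fps_X"
  by (simp add: fps_of_poly_pCons fps_of_poly_const)

lemma fp_X_minus_X2: "fp [:0, 1, -1:] = fps_X - fps_X * fps_X"
  by (simp add: fps_of_poly_pCons algebra_simps)

lemma not_Ints_add_of_int: "(x::complex) \<notin> \<int> \<Longrightarrow> x + of_int k \<notin> \<int>"
  by (metis Ints_diff Ints_of_int add_diff_cancel_right')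

lemma not_Ints_add_of_nat_nonzero: "(x::complex) \<notin> \<int> \<Longrightarrow> x + of_nat n \<noteq> 0"
  by (metis Ints_minus Ints_of_nat add_eq_0_iff2)

lemma pochhammer_nonzero_if_not_Ints: "(x::complex) \<notin> \<int> \<Longrightarrow> pochhammer x n \<noteq> 0"
  by (auto simp: pochhammer_eq_0_iff)

lemma of_nat_plus_1_nonzero: "of_nat n + (1::complex) \<noteq> 0"
  by (metis of_nat_Suc of_nat_eq_0_iff add.commute nat.distinct(1))

lemma fps_nth_X_deriv: "(fps_X * fps_deriv G) $ n = of_nat n * G $ n"
  by (cases n) (simp_all add: fps_X_mult_nth del: of_nat_Suc)

section \<open>The hypergeometric power series\<close>

definition hyp_fps :: "complex \<Rightarrow> complex \<Rightarrow> complex \<Rightarrow> complex fps" where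
  "hyp_fps a b c = Abs_fps (\<lambda>n. pochhammer a n * pochhammer b n / (pochhammer c n * fact n))"

lemma fps_nth_hyp_fps:
  "hyp_fps a b c $ n = pochhammer a n * pochhammer b n / (pochhammer c n * fact n)"
  by (simp add: hyp_fps_def)

lemma hyp2f1_eq_eval_fps: "hyp2f1 a b c x = eval_fps (hyp_fps a b c) x"
  by (simp add: hyp2f1_def eval_fps_def hyp_fps_def)

lemma hyp_fps_commute: "hyp_fps a b c = hyp_fps b a c"
  by (simp add: hyp_fps_def mult.commute)

lemma hyp_fps_nonzero: "hyp_fps a b c \<noteq> 0"
proof
  assume "hyp_fps a b c = 0"
  then have "hyp_fps a b c $ 0 = 0" by simp
  then show False by (simp add: fps_nth_hyp_fps)
qed

lemma hyp_fps_nth_Suc: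
  assumes "c \<notin> \<int>"
  shows "hyp_fps a b c $ Suc n =
           hyp_fps a b c $ n * ((a + of_nat n) * (b + of_nat n)) / ((c + of_nat n) * (of_nat n + 1))"
proof -
  have "pochhammer c n \<noteq> 0" "c + of_nat n \<noteq> 0"
    using pochhammer_nonzero_if_not_Ints[OF assms] not_Ints_add_of_nat_nonzero[OF assms] by auto
  then show ?thesis
    using of_nat_plus_1_nonzero[of n]
    by (simp add: fps_nth_hyp_fps pochhammer_Suc fact_Suc field_simps add.commute)
qed

lemma hyp_fps_recurrence:
  assumes "c \<notin> \<int>"
  shows "(of_nat n + 1) * (c + of_nat n) * hyp_fps a b c $ Suc n =
           (a + of_nat n) * (b + of_nat n) * hyp_fps a b c $ n"
  using not_Ints_add_of_nat_nonzero[OF assms, of n] of_nat_plus_1_nonzero[of n]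
  by (simp add: hyp_fps_nth_Suc[OF assms])

lemma hyp_fps_deriv: "fps_deriv (hyp_fps a b c) = fps_const (a*b/c) * hyp_fps (a+1) (b+1) (c+1)"
  by (rule fps_ext) (simp add: fps_nth_hyp_fps pochhammer_rec fact_Suc field_simps del: of_nat_Suc)

lemma fps_ode_of_recurrence:
  fixes H :: "complex fps"
  assumes "\<And>n. (of_nat n + 1) * (c + of_nat n) * H $ Suc n = (a + of_nat n) * (b + of_nat n) * H $ n"
  shows "fp [:0,1,-1:] * fps_deriv (fps_deriv H) = fp [:-c, a+b+1:] * fps_deriv H + fp [:a*b:] * H"
proof (rule fps_ext)
  fix n
  show "(fp [:0,1,-1:] * fps_deriv (fps_deriv H)) $ n =
        (fp [:-c, a+b+1:] * fps_deriv H + fp [:a*b:] * H) $ n"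
  proof (cases n)
    case 0
    then show ?thesis using assms[of 0] by (simp add: fps_of_poly_pCons fps_X_mult_nth)
  next
    case (Suc m)
    then show ?thesis using assms[of n]
      by (cases m) (simp_all add: fps_of_poly_pCons fps_X_mult_nth algebra_simps)
  qed
qed

lemma hyp_fps_ode:
  assumes "c \<notin> \<int>"
  shows "fp [:0,1,-1:] * fps_deriv (fps_deriv (hyp_fps a b c)) =
           fp [:-c, a+b+1:] * fps_deriv (hyp_fps a b c) + fp [:a*b:] * hyp_fps a b c"
  by (rule fps_ode_of_recurrence) (rule hyp_fps_recurrence[OF assms])

lemma hyp_fps_raise_a:
  "fp [:a:] * hyp_fps (a+1) b c = fp [:a:] * hyp_fps a b c + fp [:0,1:] * fps_deriv (hyp_fps a b c)"
proof (rule fps_ext)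
  fix n
  have e: "a * pochhammer (a+1) n = (a + of_nat n) * pochhammer a n"
    using pochhammer_rec[of a n] pochhammer_rec'[of a n] by simp
  have "(fp [:a:] * hyp_fps (a+1) b c) $ n = (a * pochhammer (a+1) n) * pochhammer b n / (pochhammer c n * fact n)"
    by (simp add: fp_const fps_nth_hyp_fps)
  also have "\<dots> = (a + of_nat n) * pochhammer a n * pochhammer b n / (pochhammer c n * fact n)"
    by (simp only: e)
  also have "\<dots> = (fp [:a:] * hyp_fps a b c + fp [:0,1:] * fps_deriv (hyp_fps a b c)) $ n"
    by (simp add: fp_const fp_linear fps_nth_X_deriv fps_nth_hyp_fps algebra_simps add_divide_distrib)
  finally show "(fp [:a:] * hyp_fps (a+1) b c) $ n =
      (fp [:a:] * hyp_fps a b c + fp [:0,1:] * fps_deriv (hyp_fps a b c)) $ n" .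
qed

lemma hyp_fps_lower_c:
  assumes "c \<notin> \<int>"
  shows "fp [:c-1:] * hyp_fps a b (c-1) = fp [:c-1:] * hyp_fps a b c + fp [:0,1:] * fps_deriv (hyp_fps a b c)"
proof (rule fps_ext)
  fix n
  have "pochhammer c n \<noteq> 0" "pochhammer (c-1) n \<noteq> 0"
    using pochhammer_nonzero_if_not_Ints not_Ints_add_of_int[OF assms, of "-1"] assms by auto
  moreover have "(c-1) * pochhammer c n = (c - 1 + of_nat n) * pochhammer (c-1) n"
    using pochhammer_rec[of "c-1" n] pochhammer_rec'[of "c-1" n] by simp
  ultimately have e: "(c-1) / pochhammer (c-1) n = (c - 1 + of_nat n) / pochhammer c n"
    by (simp add: field_simps)
  have "(fp [:c-1:] * hyp_fps a b (c-1)) $ n = (c-1) / pochhammer (c-1) n * (pochhammer a n * pochhammer b n / fact n)"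
    by (simp add: fp_const fps_nth_hyp_fps)
  also have "\<dots> = (c - 1 + of_nat n) / pochhammer c n * (pochhammer a n * pochhammer b n / fact n)"
    by (simp only: e)
  also have "\<dots> = (fp [:c-1:] * hyp_fps a b c + fp [:0,1:] * fps_deriv (hyp_fps a b c)) $ n"
    by (simp add: fp_const fp_linear fps_nth_X_deriv fps_nth_hyp_fps algebra_simps add_divide_distrib diff_divide_distrib)
  finally show "(fp [:c-1:] * hyp_fps a b (c-1)) $ n =
      (fp [:c-1:] * hyp_fps a b c + fp [:0,1:] * fps_deriv (hyp_fps a b c)) $ n" .
qed

lemma hyp_fps_nth_Suc_lower_a:
  assumes "c \<notin> \<int>"
  shows "hyp_fps (a-1) b c $ Suc n =
           hyp_fps a b c $ n * ((a - 1) * (b + of_nat n)) / ((c + of_nat n) * (of_nat n + 1))"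
proof -
  have "pochhammer c n \<noteq> 0" "c + of_nat n \<noteq> 0"
    using pochhammer_nonzero_if_not_Ints[OF assms] not_Ints_add_of_nat_nonzero[OF assms] by auto
  have "pochhammer (a-1) (Suc n) = (a-1) * pochhammer a n"
    using pochhammer_rec[of "a-1" n] by simp
  then have "hyp_fps (a-1) b c $ Suc n = ((a-1) * pochhammer a n) * (pochhammer b n * (b + of_nat n))
      / ((pochhammer c n * (c + of_nat n)) * ((of_nat n + 1) * fact n))"
    unfolding fps_nth_hyp_fps by (simp add: pochhammer_Suc fact_Suc add.commute)
  then show ?thesis
    using \<open>pochhammer c n \<noteq> 0\<close> \<open>c + of_nat n \<noteq> 0\<close> of_nat_plus_1_nonzero[of n]
    by (simp add: fps_nth_hyp_fps field_simps)
qed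

lemma hyp_fps_lower_a:
  assumes "c \<notin> \<int>"
  shows "fp [:c-a:] * hyp_fps (a-1) b c =
           fp [:0,1,-1:] * fps_deriv (hyp_fps a b c) + fp [:c-a, -b:] * hyp_fps a b c"
proof (rule fps_ext)
  fix n
  define f where "f = fps_nth (hyp_fps a b c)"
  show "(fp [:c-a:] * hyp_fps (a-1) b c) $ n =
          (fp [:0,1,-1:] * fps_deriv (hyp_fps a b c) + fp [:c-a, -b:] * hyp_fps a b c) $ n"
  proof (cases n)
    case 0
    then show ?thesis by (simp add: fp_const fp_linear fp_X_minus_X2 fps_nth_hyp_fps)
  next
    case (Suc m)
    have nz: "(c + of_nat m) * (of_nat m + 1) \<noteq> 0"
      using not_Ints_add_of_nat_nonzero[OF assms] of_nat_plus_1_nonzero by simp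
    have "(fp [:0,1,-1:] * fps_deriv (hyp_fps a b c) + fp [:c-a, -b:] * hyp_fps a b c) $ Suc m
        = (of_nat m + 1 + c - a) * f (Suc m) - (of_nat m + b) * f m"
      by (simp add: f_def fp_const fp_linear fp_X_minus_X2 fps_X_mult_nth algebra_simps)
    also have "\<dots> = f m * ((c - a) * ((a - 1) * (b + of_nat m)) / ((c + of_nat m) * (of_nat m + 1)))"
      using nz unfolding f_def hyp_fps_nth_Suc[OF assms] by (simp add: field_simps)
    also have "\<dots> = (fp [:c-a:] * hyp_fps (a-1) b c) $ Suc m"
      by (simp add: f_def fp_const hyp_fps_nth_Suc_lower_a[OF assms])
    finally show ?thesis using Suc by simp
  qed
qed

section \<open>Combinations of a power series and its derivative\<close>

text \<open>\<open>G\<close> is a \<open>\<complex>(x)\<close>-linear combination of \<open>H'\<close> and \<open>H\<close>, with the denominators cleared.\<close>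
definition rat_span :: "complex fps \<Rightarrow> complex fps \<Rightarrow> bool" where
  "rat_span H G \<longleftrightarrow> (\<exists>d q r. d \<noteq> 0 \<and> fp d * G = fp q * fps_deriv H + fp r * H)"

lemma rat_span_self: "rat_span H H"
  unfolding rat_span_def by (rule exI[of _ 1], rule exI[of _ 0], rule exI[of _ 1]) simp

lemma rat_span_combination:
  assumes "rat_span H G1" "rat_span H G2"
  shows "rat_span H (fp p1 * G1 + fp p2 * G2)"
proof -
  obtain d1 q1 r1 where d1: "d1 \<noteq> 0" and E1: "fp d1 * G1 = fp q1 * fps_deriv H + fp r1 * H"
    using assms(1) unfolding rat_span_def by blast
  obtain d2 q2 r2 where d2: "d2 \<noteq> 0" and E2: "fp d2 * G2 = fp q2 * fps_deriv H + fp r2 * H"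
    using assms(2) unfolding rat_span_def by blast
  have "fp (d1*d2) * (fp p1 * G1 + fp p2 * G2) = fp p1 * fp d2 * (fp d1 * G1) + fp p2 * fp d1 * (fp d2 * G2)"
    by (simp add: fps_of_poly_mult algebra_simps)
  also have "\<dots> = fp (p1*d2*q1 + p2*d1*q2) * fps_deriv H + fp (p1*d2*r1 + p2*d1*r2) * H"
    unfolding E1 E2 by (simp add: fps_of_poly_mult fps_of_poly_add algebra_simps)
  finally show ?thesis using d1 d2 unfolding rat_span_def by (metis mult_eq_0_iff)
qed

lemma rat_span_cancel_const:
  assumes "k \<noteq> 0" "rat_span H (fp [:k:] * G)"
  shows "rat_span H G"
proof -
  obtain d q r where "d \<noteq> 0" and "fp d * (fp [:k:] * G) = fp q * fps_deriv H + fp r * H"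
    using assms(2) unfolding rat_span_def by blast
  moreover have "fp (d * [:k:]) * G = fp d * (fp [:k:] * G)"
    by (simp add: fps_of_poly_mult mult.assoc)
  ultimately show ?thesis
    using assms(1) unfolding rat_span_def by (metis mult_eq_0_iff pCons_eq_0_iff)
qed

text \<open>Differentiating \<open>d G = q H' + r H\<close> produces \<open>H''\<close>, which the differential equation
  expresses through \<open>H'\<close> and \<open>H\<close> at the cost of the extra denominator \<open>P d\<close>.\<close>
lemma rat_span_deriv:
  assumes P: "P \<noteq> 0" and ode: "fp P * fps_deriv (fps_deriv H) = fp S * fps_deriv H + fp T * H"
    and "rat_span H G"
  shows "rat_span H (fps_deriv G)"
proof -
  obtain d q r where d: "d \<noteq> 0" and E: "fp d * G = fp q * fps_deriv H + fp r * H"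
    using assms(3) unfolding rat_span_def by blast
  have "fp (pderiv d) * G + fp d * fps_deriv G = fp (pderiv q) * fps_deriv H + fp q * fps_deriv (fps_deriv H)
      + fp (pderiv r) * H + fp r * fps_deriv H"
    using arg_cong[OF E, of fps_deriv] by (simp add: fps_of_poly_pderiv algebra_simps)
  then have E': "fp d * fps_deriv G = fp (pderiv q) * fps_deriv H + fp q * fps_deriv (fps_deriv H)
      + fp (pderiv r) * H + fp r * fps_deriv H - fp (pderiv d) * G"
    by (simp add: algebra_simps)
  have "fp (P*d*d) * fps_deriv G = fp P * fp d * (fp d * fps_deriv G)"
    by (simp add: fps_of_poly_mult ac_simps)
  also have "\<dots> = fp d * fp q * (fp P * fps_deriv (fps_deriv H))
      + fp P * fp d * (fp (pderiv q) * fps_deriv H + fp (pderiv r) * H + fp r * fps_deriv H)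
      - fp P * fp (pderiv d) * (fp d * G)"
    unfolding E' by (simp add: algebra_simps)
  also have "\<dots> = fp (P * d * (pderiv q + r) + d * q * S - P * pderiv d * q) * fps_deriv H
      + fp (d * q * T + P * d * pderiv r - P * pderiv d * r) * H"
    unfolding ode E by (simp add: fps_of_poly_mult fps_of_poly_add fps_of_poly_diff algebra_simps)
  finally show ?thesis
    using P d unfolding rat_span_def by (metis mult_eq_0_iff)
qed

section \<open>Contiguous functions\<close>

definition hyp_nondegenerate :: "complex \<Rightarrow> complex \<Rightarrow> complex \<Rightarrow> bool" where
  "hyp_nondegenerate a b c \<longleftrightarrow> a \<notin> \<int> \<and> b \<notin> \<int> \<and> c \<notin> \<int> \<and> c - a \<notin> \<int> \<and> c - b \<notin> \<int>"

lemma standing_imp_hyp_nondegenerate: "standing a b c \<Longrightarrow> hyp_nondegenerate a b c"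
  by (simp add: standing_def hyp_nondegenerate_def)

lemma hyp_nondegenerate_shift:
  assumes "hyp_nondegenerate a b c"
  shows "hyp_nondegenerate (a + of_int k) (b + of_int l) (c + of_int m)"
proof -
  have "c + of_int m - (a + of_int k) = (c - a) + of_int (m - k)"
       "c + of_int m - (b + of_int l) = (c - b) + of_int (m - l)"
    by simp_all
  then show ?thesis
    using assms unfolding hyp_nondegenerate_def by (metis not_Ints_add_of_int)
qed

lemma rat_span_hyp_deriv:
  "c \<notin> \<int> \<Longrightarrow> rat_span (hyp_fps a b c) G \<Longrightarrow> rat_span (hyp_fps a b c) (fps_deriv G)"
  by (rule rat_span_deriv[OF _ hyp_fps_ode]) simp_all

lemma rat_span_raise_a:
  assumes "c \<notin> \<int>" "\<alpha> \<noteq> 0" "rat_span (hyp_fps a b c) (hyp_fps \<alpha> \<beta> \<gamma>)"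
  shows "rat_span (hyp_fps a b c) (hyp_fps (\<alpha>+1) \<beta> \<gamma>)"
proof (rule rat_span_cancel_const[OF assms(2)])
  show "rat_span (hyp_fps a b c) (fp [:\<alpha>:] * hyp_fps (\<alpha>+1) \<beta> \<gamma>)"
    unfolding hyp_fps_raise_a
    by (intro rat_span_combination assms(3) rat_span_hyp_deriv[OF assms(1)])
qed

lemma rat_span_lower_a:
  assumes "c \<notin> \<int>" "\<gamma> \<notin> \<int>" "\<gamma> \<noteq> \<alpha>" "rat_span (hyp_fps a b c) (hyp_fps \<alpha> \<beta> \<gamma>)"
  shows "rat_span (hyp_fps a b c) (hyp_fps (\<alpha>-1) \<beta> \<gamma>)"
proof (rule rat_span_cancel_const)
  show "\<gamma> - \<alpha> \<noteq> 0" using assms(3) by simp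
  show "rat_span (hyp_fps a b c) (fp [:\<gamma>-\<alpha>:] * hyp_fps (\<alpha>-1) \<beta> \<gamma>)"
    unfolding hyp_fps_lower_a[OF assms(2)]
    by (intro rat_span_combination assms(4) rat_span_hyp_deriv[OF assms(1)])
qed

lemma rat_span_lower_c:
  assumes "c \<notin> \<int>" "\<gamma> \<notin> \<int>" "rat_span (hyp_fps a b c) (hyp_fps \<alpha> \<beta> \<gamma>)"
  shows "rat_span (hyp_fps a b c) (hyp_fps \<alpha> \<beta> (\<gamma>-1))"
proof (rule rat_span_cancel_const)
  show "\<gamma> - 1 \<noteq> 0" using assms(2) by auto
  show "rat_span (hyp_fps a b c) (fp [:\<gamma>-1:] * hyp_fps \<alpha> \<beta> (\<gamma>-1))"
    unfolding hyp_fps_lower_c[OF assms(2)]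
    by (intro rat_span_combination assms(3) rat_span_hyp_deriv[OF assms(1)])
qed

text \<open>Raising \<open>c\<close>: differentiate, then lower \<open>a\<close> and \<open>b\<close> again.\<close>
lemma rat_span_raise_c:
  assumes c: "c \<notin> \<int>" and nd: "hyp_nondegenerate \<alpha> \<beta> \<gamma>"
    and span: "rat_span (hyp_fps a b c) (hyp_fps \<alpha> \<beta> \<gamma>)"
  shows "rat_span (hyp_fps a b c) (hyp_fps \<alpha> \<beta> (\<gamma>+1))"
proof -
  have nz: "\<alpha> * \<beta> / \<gamma> \<noteq> 0" "\<gamma> + 1 \<notin> \<int>" "\<gamma> + 1 \<noteq> \<alpha> + 1" "\<gamma> + 1 \<noteq> \<beta> + 1"
    using nd not_Ints_add_of_int[of \<gamma> 1] unfolding hyp_nondegenerate_def by auto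
  have "rat_span (hyp_fps a b c) (fp [:\<alpha>*\<beta>/\<gamma>:] * hyp_fps (\<alpha>+1) (\<beta>+1) (\<gamma>+1))"
    using rat_span_hyp_deriv[OF c span] by (simp add: hyp_fps_deriv fp_const)
  then have "rat_span (hyp_fps a b c) (hyp_fps (\<alpha>+1) (\<beta>+1) (\<gamma>+1))"
    by (rule rat_span_cancel_const[OF nz(1)])
  then have "rat_span (hyp_fps a b c) (hyp_fps (\<alpha>+1-1) (\<beta>+1) (\<gamma>+1))"
    by (rule rat_span_lower_a[OF c nz(2,3)])
  then have "rat_span (hyp_fps a b c) (hyp_fps (\<beta>+1) \<alpha> (\<gamma>+1))"
    by (simp add: hyp_fps_commute)
  then have "rat_span (hyp_fps a b c) (hyp_fps (\<beta>+1-1) \<alpha> (\<gamma>+1))"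
    by (rule rat_span_lower_a[OF c nz(2,4)])
  then show ?thesis
    by (simp add: hyp_fps_commute)
qed

lemma rat_span_hyp_fps_neighbours:
  assumes c: "c \<notin> \<int>" and nd: "hyp_nondegenerate \<alpha> \<beta> \<gamma>"
    and span: "rat_span (hyp_fps a b c) (hyp_fps \<alpha> \<beta> \<gamma>)"
  shows "rat_span (hyp_fps a b c) (hyp_fps (\<alpha>+1) \<beta> \<gamma>)" "rat_span (hyp_fps a b c) (hyp_fps (\<alpha>-1) \<beta> \<gamma>)"
    and "rat_span (hyp_fps a b c) (hyp_fps \<alpha> (\<beta>+1) \<gamma>)" "rat_span (hyp_fps a b c) (hyp_fps \<alpha> (\<beta>-1) \<gamma>)"
    and "rat_span (hyp_fps a b c) (hyp_fps \<alpha> \<beta> (\<gamma>+1))" "rat_span (hyp_fps a b c) (hyp_fps \<alpha> \<beta> (\<gamma>-1))"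
proof -
  have nz: "\<alpha> \<noteq> 0" "\<beta> \<noteq> 0" "\<gamma> \<notin> \<int>" "\<gamma> \<noteq> \<alpha>" "\<gamma> \<noteq> \<beta>"
    using nd unfolding hyp_nondegenerate_def by auto
  have span': "rat_span (hyp_fps a b c) (hyp_fps \<beta> \<alpha> \<gamma>)"
    using span by (simp add: hyp_fps_commute)
  show "rat_span (hyp_fps a b c) (hyp_fps (\<alpha>+1) \<beta> \<gamma>)"
    by (rule rat_span_raise_a[OF c nz(1) span])
  show "rat_span (hyp_fps a b c) (hyp_fps (\<alpha>-1) \<beta> \<gamma>)"
    by (rule rat_span_lower_a[OF c nz(3,4) span])
  show "rat_span (hyp_fps a b c) (hyp_fps \<alpha> (\<beta>+1) \<gamma>)"
    using rat_span_raise_a[OF c nz(2) span'] by (simp add: hyp_fps_commute)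
  show "rat_span (hyp_fps a b c) (hyp_fps \<alpha> (\<beta>-1) \<gamma>)"
    using rat_span_lower_a[OF c nz(3,5) span'] by (simp add: hyp_fps_commute)
  show "rat_span (hyp_fps a b c) (hyp_fps \<alpha> \<beta> (\<gamma>+1))"
    by (rule rat_span_raise_c[OF c nd span])
  show "rat_span (hyp_fps a b c) (hyp_fps \<alpha> \<beta> (\<gamma>-1))"
    by (rule rat_span_lower_c[OF c nz(3) span])
qed

lemma rat_span_hyp_fps_shift:
  assumes nd: "hyp_nondegenerate a b c"
  shows "rat_span (hyp_fps a b c) (hyp_fps (a + of_int k) (b + of_int l) (c + of_int m))"
proof -
  let ?S = "\<lambda>k l m. rat_span (hyp_fps a b c) (hyp_fps (a + of_int k) (b + of_int l) (c + of_int m))"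
  have c: "c \<notin> \<int>" using nd unfolding hyp_nondegenerate_def by simp
  note nb = rat_span_hyp_fps_neighbours[OF c hyp_nondegenerate_shift[OF nd]]
  have plus: "x + of_int (i+1) = x + of_int i + 1" and minus: "x + of_int (i-1) = x + of_int i - 1"
    for x :: complex and i :: int
    by simp_all
  have "?S 0 0 m" for m
    by (induction m rule: int_induct[where k=0])
       (use rat_span_self in simp, simp_all only: plus minus nb)
  then have "?S 0 l m" for l m
    by (induction l rule: int_induct[where k=0]) (simp_all only: plus minus nb)
  then show "?S k l m"
    by (induction k rule: int_induct[where k=0]) (simp_all only: plus minus nb)
qed

section \<open>Linear independence of \<open>F\<close> and \<open>F'\<close> over \<open>\<complex>(x)\<close>\<close>

text \<open>If \<open>Q F' = P F\<close>, then \<open>y = P/Q\<close> solves the Riccati equation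
  \<open>x(1-x)(y' + y\<^sup>2) + (c - (a+b+1)x) y - ab = 0\<close> derived from the hypergeometric equation;
  \<open>riccati_poly a b c P Q\<close> is its left-hand side times \<open>Q\<^sup>2\<close>.\<close>
definition riccati_poly :: "complex \<Rightarrow> complex \<Rightarrow> complex \<Rightarrow> complex poly \<Rightarrow> complex poly \<Rightarrow> complex poly" where
  "riccati_poly a b c P Q = [:0,1,-1:] * (Q * pderiv P - P * pderiv Q + P * P)
     + [:c, -(a+b+1):] * P * Q - [:a*b:] * Q * Q"

lemma log_deriv_riccati:
  fixes H :: "complex fps"
  assumes ode: "fp X * fps_deriv (fps_deriv H) = fp S * fps_deriv H + fp T * H"
    and E: "fp Q * fps_deriv H = fp P * H"
  shows "fp (X * (Q * pderiv P - P * pderiv Q + P * P) - S * P * Q - T * Q * Q) * H = 0"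
proof -
  have "fp (pderiv Q) * fps_deriv H + fp Q * fps_deriv (fps_deriv H) = fp (pderiv P) * H + fp P * fps_deriv H"
    using arg_cong[OF E, of fps_deriv] by (simp add: fps_of_poly_pderiv algebra_simps)
  then have E': "fp Q * fps_deriv (fps_deriv H) = fp (pderiv P) * H + (fp P - fp (pderiv Q)) * fps_deriv H"
    by (simp add: algebra_simps)
  have "fp X * fp Q * fp Q * fps_deriv (fps_deriv H) = fp X * fp Q * (fp Q * fps_deriv (fps_deriv H))"
    by (simp only: mult.assoc)
  also have "\<dots> = fp X * fp Q * fp (pderiv P) * H + fp X * (fp P - fp (pderiv Q)) * (fp Q * fps_deriv H)"
    unfolding E' by (simp add: algebra_simps)
  also have "\<dots> = fp X * fp Q * fp (pderiv P) * H + fp X * (fp P - fp (pderiv Q)) * (fp P * H)"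
    by (simp only: E)
  finally have l: "fp X * fp Q * fp Q * fps_deriv (fps_deriv H)
      = fp X * fp Q * fp (pderiv P) * H + fp X * (fp P - fp (pderiv Q)) * (fp P * H)" .
  have "fp X * fp Q * fp Q * fps_deriv (fps_deriv H) = fp Q * fp Q * (fp X * fps_deriv (fps_deriv H))"
    by (simp only: ac_simps)
  also have "\<dots> = fp S * fp Q * (fp Q * fps_deriv H) + fp T * fp Q * fp Q * H"
    unfolding ode by (simp add: algebra_simps)
  also have "\<dots> = fp S * fp Q * (fp P * H) + fp T * fp Q * fp Q * H"
    by (simp only: E)
  finally have r: "fp X * fp Q * fp Q * fps_deriv (fps_deriv H)
      = fp S * fp Q * (fp P * H) + fp T * fp Q * fp Q * H" .
  have "fp (X * (Q * pderiv P - P * pderiv Q + P * P) - S * P * Q - T * Q * Q) * H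
      = (fp X * fp Q * fp (pderiv P) * H + fp X * (fp P - fp (pderiv Q)) * (fp P * H))
        - (fp S * fp Q * (fp P * H) + fp T * fp Q * fp Q * H)"
    by (simp add: fps_of_poly_mult fps_of_poly_add fps_of_poly_diff algebra_simps)
  also have "\<dots> = 0"
    using l r by simp
  finally show ?thesis .
qed

lemma riccati_poly_eq_0:
  assumes c: "c \<notin> \<int>" and E: "fp Q * fps_deriv (hyp_fps a b c) = fp P * hyp_fps a b c"
  shows "riccati_poly a b c P Q = 0"
proof -
  have "[:c, -(a+b+1):] = - [:-c, a+b+1:]"
    by simp
  then have "riccati_poly a b c P Q = [:0,1,-1:] * (Q * pderiv P - P * pderiv Q + P * P)
      - [:-c, a+b+1:] * P * Q - [:a*b:] * Q * Q"
    by (simp only: riccati_poly_def minus_mult_left diff_conv_add_uminus)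
  then have "fp (riccati_poly a b c P Q) * hyp_fps a b c = 0"
    using log_deriv_riccati[OF hyp_fps_ode[OF c] E] by simp
  then show ?thesis
    using hyp_fps_nonzero[of a b c] by (simp add: fp_eq_0_iff)
qed

lemma poly_riccati_poly:
  "poly (riccati_poly a b c P Q) z =
     z * (1 - z) * (poly Q z * poly (pderiv P) z - poly P z * poly (pderiv Q) z + poly P z * poly P z)
     + (c - (a+b+1) * z) * poly P z * poly Q z - a * b * poly Q z * poly Q z"
  unfolding riccati_poly_def by (simp add: algebra_simps)

lemma poly_pderiv_riccati_poly_1:
  assumes "poly Q 1 = 0"
  shows "poly (pderiv (riccati_poly a b c P Q)) 1 = poly P 1 * ((c - a - b) * poly (pderiv Q) 1 - poly P 1)"
  using assms
  by (simp add: riccati_poly_def pderiv_mult pderiv_add pderiv_diff pderiv_minus pderiv_smult pderiv_pCons algebra_simps)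

text \<open>The residue of \<open>P/Q\<close> is \<open>1\<close> at a pole \<open>z \<noteq> 1\<close> and the local exponent \<open>c - a - b\<close> at \<open>z = 1\<close>;
  at \<open>z = 1\<close>, where \<open>x(1-x)\<close> vanishes as well, it is read off from the derivative.\<close>
lemma riccati_residue:
  assumes cop: "coprime P Q" and E: "riccati_poly a b c P Q = 0"
    and z: "poly Q z = 0" "z \<noteq> 0"
  shows "poly P z = (if z = 1 then c - a - b else 1) * poly (pderiv Q) z"
proof -
  have P: "poly P z \<noteq> 0" using coprime_poly_0[OF cop, of z] z by simp
  show ?thesis
  proof (cases "z = 1")
    case True
    have "poly (pderiv (riccati_poly a b c P Q)) 1 = 0" using E by simp
    then show ?thesis
      using P z True by (simp add: poly_pderiv_riccati_poly_1)
  next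
    case False
    have "z * (1 - z) * (poly P z * (poly P z - poly (pderiv Q) z)) = 0"
      using arg_cong[OF E, of "\<lambda>p. poly p z"] z by (simp add: poly_riccati_poly algebra_simps)
    then show ?thesis using P z False by simp
  qed
qed

lemma riccati_roots_simple:
  assumes "coprime P Q" "riccati_poly a b c P Q = 0" "poly Q z = 0" "z \<noteq> 0"
  shows "poly (pderiv Q) z \<noteq> 0"
  using riccati_residue[OF assms] coprime_poly_0[OF assms(1), of z] assms(3) by auto

lemma dvd_if_roots_simple:
  fixes Q F :: "complex poly"
  assumes simple: "\<And>z. poly Q z = 0 \<Longrightarrow> poly (pderiv Q) z \<noteq> 0" and Q: "Q \<noteq> 0"
    and roots: "\<And>z. poly Q z = 0 \<Longrightarrow> poly F z = 0"
  shows "Q dvd F"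
proof (cases "F = 0")
  case False
  define ZQ ZF where "ZQ = {z. poly Q z = 0}" and "ZF = {z. poly F z = 0}"
  have fin: "finite ZF" using poly_roots_finite[OF False] by (simp add: ZF_def)
  have sub: "ZQ \<subseteq> ZF" using roots by (auto simp: ZQ_def ZF_def)
  have "(\<Prod>z\<in>ZQ. [:-z, 1:]) dvd (\<Prod>z\<in>ZQ. [:-z, 1:] ^ order z F)"
  proof (rule prod_dvd_prod)
    fix z assume "z \<in> ZQ"
    then have "order z F \<noteq> 0" using sub False order_root by (auto simp: ZF_def)
    then show "[:-z, 1:] dvd [:-z, 1:] ^ order z F" by (simp add: dvd_power)
  qed
  also have "\<dots> dvd (\<Prod>z\<in>ZF. [:-z, 1:] ^ order z F)"
    by (rule prod_dvd_prod_subset[OF fin sub])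
  finally have "smult (lead_coeff Q) (\<Prod>z\<in>ZQ. [:-z, 1:]) dvd smult (lead_coeff F) (\<Prod>z\<in>ZF. [:-z, 1:] ^ order z F)"
    using Q by (simp add: smult_dvd_iff dvd_smult)
  moreover have "rsquarefree Q" using simple unfolding rsquarefree_roots by auto
  ultimately show ?thesis
    using complex_poly_decompose_rsquarefree complex_poly_decompose[of F] by (simp add: ZQ_def ZF_def)
qed simp

lemma coeff_mult_at_degree_bounds:
  fixes A B :: "'a::idom poly"
  assumes "degree A \<le> m" "degree B \<le> k"
  shows "coeff (A * B) (m + k) = coeff A m * coeff B k"
proof (cases "degree A = m \<and> degree B = k")
  case True
  then show ?thesis using coeff_mult_degree_sum[of A B] by simp
next
  case False
  then have "degree A < m \<or> degree B < k" using assms by auto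
  moreover have "degree (A * B) < m + k"
    using degree_mult_le[of A B] assms calculation by linarith
  ultimately show ?thesis by (auto simp: coeff_eq_0)
qed

lemma coeff_mult3_at_degree_bounds:
  fixes A B C :: "'a::idom poly"
  assumes "degree A \<le> m" "degree B \<le> k" "degree C \<le> l"
  shows "coeff (A * B * C) (m + k + l) = coeff A m * coeff B k * coeff C l"
proof -
  have "degree (A * B) \<le> m + k" using degree_mult_le[of A B] assms by linarith
  then show ?thesis
    using coeff_mult_at_degree_bounds[OF _ assms(3)] coeff_mult_at_degree_bounds[OF assms(1,2)] by simp
qed

lemma degree_mult3_le: "degree (A * B * C) \<le> degree A + degree B + degree (C :: 'a::idom poly)"
  using degree_mult_le[of "A * B" C] degree_mult_le[of A B] by linarith

definition poly_euler :: "complex poly \<Rightarrow> complex poly" where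
  "poly_euler P = [:0,1:] * pderiv P"

lemma coeff_poly_euler: "coeff (poly_euler P) k = of_nat k * coeff P k"
  by (cases k) (simp_all add: poly_euler_def coeff_pderiv del: of_nat_Suc)

lemma degree_poly_euler_le: "degree (poly_euler P) \<le> degree P"
  by (rule degree_le) (simp add: coeff_poly_euler coeff_eq_0)

text \<open>Writing \<open>x P'\<close> instead of \<open>P'\<close> keeps the degrees of the summands aligned.\<close>
lemma riccati_poly_euler:
  "riccati_poly a b c P Q =
     [:1,-1:] * Q * poly_euler P - [:1,-1:] * P * poly_euler Q + [:0,1,-1:] * P * P
     + [:c, -(a+b+1):] * P * Q - [:a*b:] * Q * Q"
proof -
  have "[:0,1,-1::complex:] = [:1,-1:] * [:0,1:]" by simp
  then show ?thesis unfolding riccati_poly_def poly_euler_def by (simp add: algebra_simps)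
qed

lemma riccati_poly_degree_less:
  assumes ab: "a \<noteq> 0" "b \<noteq> 0" and E: "riccati_poly a b c P Q = 0" and Q: "Q \<noteq> 0"
  shows "degree P < degree Q"
proof (rule ccontr)
  assume "\<not> degree P < degree Q"
  then have le: "degree Q \<le> degree P" by simp
  show False
  proof (cases "P = 0")
    case True
    then have "riccati_poly a b c P Q = - ([:a*b:] * (Q * Q))"
      by (simp add: riccati_poly_def mult.assoc)
    then show False using E ab Q by simp
  next
    case False
    define p where "p = degree P"
    have "degree ([:1,-1:] * Q * poly_euler P) < 2*p+2"
      "degree ([:1,-1:] * P * poly_euler Q) < 2*p+2"
      "degree ([:c, -(a+b+1):] * P * Q) < 2*p+2"
      "degree ([:a*b:] * Q * Q) < 2*p+2"
      using degree_mult3_le[of "[:1,-1:]" Q "poly_euler P"] degree_poly_euler_le[of P]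
        degree_mult3_le[of "[:1,-1:]" P "poly_euler Q"] degree_poly_euler_le[of Q]
        degree_mult3_le[of "[:c, -(a+b+1):]" P Q] degree_pCons_le[of c "[:-(a+b+1):]"]
        degree_mult3_le[of "[:a*b:]" Q Q] le
      unfolding p_def by auto
    then have "coeff (riccati_poly a b c P Q) (2 + p + p) = coeff ([:0,1,-1:] * P * P) (2 + p + p)"
      unfolding riccati_poly_euler coeff_add coeff_diff
      by (simp only: coeff_eq_0 mult_2 ac_simps) simp
    also have "\<dots> = - lead_coeff P * lead_coeff P"
      by (subst coeff_mult3_at_degree_bounds) (simp_all add: p_def numeral_2_eq_2)
    finally show False using E False by simp
  qed
qed

lemma coeff_riccati_poly_top:
  assumes "degree Q = n" "n \<ge> 1" "degree P \<le> n - 1"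
  shows "coeff (riccati_poly a b c P Q) (2*n) =
           - ((coeff P (n-1) + a * lead_coeff Q) * (coeff P (n-1) + b * lead_coeff Q))"
proof -
  define p q where "p = coeff P (n-1)" and "q = lead_coeff Q"
  have dQ: "degree Q \<le> n" using assms by simp
  have dDP: "degree (poly_euler P) \<le> n - 1"
    using degree_poly_euler_le[of P] assms by linarith
  have dDQ: "degree (poly_euler Q) \<le> n"
    using degree_poly_euler_le[of Q] dQ by linarith
  have i: "2*n = 1 + n + (n-1)" "2*n = 1 + (n-1) + n" "2*n = 2 + (n-1) + (n-1)" "2*n = 0 + n + n"
    using assms by auto
  have t1: "coeff ([:1,-1:] * Q * poly_euler P) (2*n) = - q * (of_nat (n-1) * p)"
    unfolding i(1) by (subst coeff_mult3_at_degree_bounds[OF _ dQ dDP]) (simp_all add: coeff_poly_euler p_def q_def assms)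
  have t2: "coeff ([:1,-1:] * P * poly_euler Q) (2*n) = - p * (of_nat n * q)"
    unfolding i(2) by (subst coeff_mult3_at_degree_bounds[OF _ assms(3) dDQ]) (simp_all add: coeff_poly_euler p_def q_def assms)
  have t3: "coeff ([:0,1,-1:] * P * P) (2*n) = - p * p"
    unfolding i(3) by (subst coeff_mult3_at_degree_bounds[OF _ assms(3) assms(3)]) (simp_all add: p_def numeral_2_eq_2)
  have t4: "coeff ([:c, -(a+b+1):] * P * Q) (2*n) = - (a+b+1) * p * q"
    unfolding i(2) by (subst coeff_mult3_at_degree_bounds[OF _ assms(3) dQ]) (simp_all add: p_def q_def assms)
  have t5: "coeff ([:a*b:] * Q * Q) (2*n) = a * b * q * q"
    unfolding i(4) by (subst coeff_mult3_at_degree_bounds[OF _ dQ dQ]) (simp_all add: q_def assms)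
  have n1: "of_nat (n-1) = (of_nat n - 1 :: complex)"
    using assms by (simp add: of_nat_diff)
  show ?thesis
    unfolding riccati_poly_euler coeff_add coeff_diff t1 t2 t3 t4 t5 n1 p_def[symmetric] q_def[symmetric]
    by (simp add: algebra_simps)
qed

lemma coeff_div_linear_factor:
  fixes Q :: "'a::field poly"
  assumes "Q \<noteq> 0" "poly Q z = 0"
  shows "coeff (Q div [:-z, 1:]) (degree Q - 1) = lead_coeff Q"
proof -
  define Q1 where "Q1 = Q div [:-z, 1:]"
  have Q1: "Q = [:-z, 1:] * Q1"
    using assms(2) unfolding Q1_def by (metis dvd_mult_div_cancel poly_eq_0_iff_dvd)
  then have "Q1 \<noteq> 0" using assms(1) by auto
  then have "degree Q = 1 + degree Q1"
    unfolding Q1 by (subst degree_mult_eq) auto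
  moreover have "lead_coeff Q = lead_coeff Q1"
    unfolding Q1 lead_coeff_mult by simp
  ultimately show ?thesis unfolding Q1_def[symmetric] by simp
qed

text \<open>Partial fractions: the residues determine \<open>P\<close> modulo \<open>Q\<close>, and \<open>deg P < deg Q\<close>.\<close>
lemma riccati_numerator:
  assumes cop: "coprime P Q" and E: "riccati_poly a b c P Q = 0" and Q0: "poly Q 0 \<noteq> 0"
    and deg: "degree P < degree Q"
  defines "\<kappa> \<equiv> if poly Q 1 = 0 then c - a - b - 1 else 0"
  shows "P = pderiv Q + smult \<kappa> (Q div [:-1,1:])"
proof -
  define Q1 where "Q1 = Q div [:-1,1:]"
  define F where "F = P - (pderiv Q + smult \<kappa> Q1)"
  have Q1: "Q = [:-1,1:] * Q1" if "poly Q 1 = 0"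
    using that unfolding Q1_def by (metis dvd_mult_div_cancel poly_eq_0_iff_dvd)
  have "poly F z = 0" if z: "poly Q z = 0" for z
  proof -
    have "z \<noteq> 0" using Q0 z by auto
    note res = riccati_residue[OF cop E z this]
    show ?thesis
    proof (cases "z = 1")
      case True
      have "poly (pderiv Q) 1 = poly Q1 1"
        using arg_cong[OF Q1, of "\<lambda>p. poly (pderiv p) 1"] z True by (simp add: pderiv_diff pderiv_pCons)
      then show ?thesis
        using res z True by (simp add: F_def \<kappa>_def algebra_simps)
    next
      case False
      have "\<kappa> * poly Q1 z = 0"
        using Q1 z False by (cases "poly Q 1 = 0") (simp_all add: \<kappa>_def)
      then show ?thesis
        using res False by (auto simp: F_def)
    qed
  qed
  then have "Q dvd F"
    using dvd_if_roots_simple riccati_roots_simple[OF cop E] Q0 deg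
    by (metis degree_0 not_less_zero)
  moreover have "degree F < degree Q"
  proof -
    have "degree (pderiv Q) < degree Q" "degree (smult \<kappa> Q1) < degree Q"
      using deg degree_div_less[of Q "[:-1,1:]"] degree_smult_le[of \<kappa> Q1]
      by (auto simp: degree_pderiv Q1_def)
    then show ?thesis
      unfolding F_def using deg by (intro degree_diff_less degree_add_less)
  qed
  ultimately have "F = 0"
    using dvd_imp_degree_le[of Q F] by (cases "F = 0") auto
  then show ?thesis by (simp add: F_def Q1_def)
qed

text \<open>At infinity \<open>P/Q\<close> behaves like \<open>-a/x\<close> or \<open>-b/x\<close>, while its residues sum to \<open>n\<close> or
  \<open>n + c - a - b - 1\<close> with \<open>n = deg Q\<close>; so one of \<open>a, b, c - a, c - b\<close> would be an integer.\<close>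
lemma riccati_no_coprime_solution:
  assumes nd: "hyp_nondegenerate a b c" and cop: "coprime P Q" and Q: "Q \<noteq> 0"
    and Q0: "poly Q 0 \<noteq> 0" and E: "riccati_poly a b c P Q = 0"
  shows False
proof -
  define n q where "n = degree Q" and "q = lead_coeff Q"
  define \<kappa> where "\<kappa> = (if poly Q 1 = 0 then c - a - b - 1 else 0)"
  have ab: "a \<noteq> 0" "b \<noteq> 0" using nd by (auto simp: hyp_nondegenerate_def)
  have deg: "degree P < n" using riccati_poly_degree_less[OF ab E Q] by (simp add: n_def)
  have q: "q \<noteq> 0" using Q by (simp add: q_def)
  have P: "P = pderiv Q + smult \<kappa> (Q div [:-1,1:])"
    unfolding \<kappa>_def using riccati_numerator[OF cop E Q0] deg by (simp add: n_def)
  have "coeff (Q div [:-1,1:]) (n-1) = q" if "poly Q 1 = 0"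
    using coeff_div_linear_factor[OF Q that] by (simp add: n_def q_def)
  then have top: "coeff P (n-1) = (of_nat n + \<kappa>) * q"
    using deg unfolding P
    by (cases n) (auto simp: coeff_pderiv \<kappa>_def n_def q_def algebra_simps simp del: of_nat_Suc)
  have "(coeff P (n-1) + a * q) * (coeff P (n-1) + b * q) = 0"
    using coeff_riccati_poly_top[of Q n P a b c] E deg by (simp add: n_def q_def)
  then have "((of_nat n + \<kappa> + a) * q) * ((of_nat n + \<kappa> + b) * q) = 0"
    unfolding top by (simp add: algebra_simps)
  then have "(of_nat n + \<kappa> + a) * (of_nat n + \<kappa> + b) = 0"
    using q by simp
  then have "a + (of_nat n + \<kappa>) = 0 \<or> b + (of_nat n + \<kappa>) = 0"
    by (simp only: mult_eq_0_iff ac_simps)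
  then have "a = - (of_nat n + \<kappa>) \<or> b = - (of_nat n + \<kappa>)"
    by (auto simp: add_eq_0_iff2)
  then have "a = - of_nat n \<or> b = - of_nat n \<or> c - b = 1 - of_nat n \<or> c - a = 1 - of_nat n"
    unfolding \<kappa>_def by (auto split: if_splits simp: algebra_simps)
  moreover have "- of_nat n \<in> \<int>" "1 - of_nat n \<in> \<int>"
    by simp_all
  ultimately show False
    using nd unfolding hyp_nondegenerate_def by metis
qed

lemma hyp_fps_deriv_independent:
  assumes nd: "hyp_nondegenerate a b c"
    and h: "fp u * fps_deriv (hyp_fps a b c) + fp v * hyp_fps a b c = 0"
  shows "u = 0 \<and> v = 0"
proof (cases "u = 0")
  case True
  then show ?thesis using h hyp_fps_nonzero[of a b c] by simp
next
  case False
  define H where "H = hyp_fps a b c"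
  define g where "g = gcd u v"
  define Q P where "Q = u div g" and "P = - (v div g)"
  have g: "g \<noteq> 0" using False by (simp add: g_def)
  have uv: "u = g * Q" "v = - (g * P)" unfolding Q_def P_def g_def by simp_all
  have cop: "coprime P Q"
    unfolding P_def Q_def g_def using div_gcd_coprime[of u v] False by (simp add: coprime_commute)
  have Q: "Q \<noteq> 0" using False uv by auto
  have "fp g * (fp Q * fps_deriv H - fp P * H) = 0"
    using h unfolding uv H_def by (simp add: fps_of_poly_mult fps_of_poly_uminus algebra_simps)
  then have E: "fp Q * fps_deriv H = fp P * H" using g by simp
  have c: "c \<notin> \<int>" using nd by (simp add: hyp_nondegenerate_def)
  have ric: "riccati_poly a b c P Q = 0"
    using riccati_poly_eq_0[OF c] E by (simp add: H_def)
  have "poly Q 0 \<noteq> 0"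
  proof
    assume Q0: "poly Q 0 = 0"
    have "(fp Q * fps_deriv H) $ 0 = (fp P * H) $ 0" using E by simp
    then have "poly P 0 = 0" using Q0 by (simp add: poly_0_coeff_0 H_def fps_nth_hyp_fps)
    then show False using coprime_poly_0[OF cop, of 0] Q0 by simp
  qed
  then show ?thesis using riccati_no_coprime_solution[OF nd cop Q _ ric] by blast
qed

section \<open>Convergence on the unit disc\<close>

lemma tendsto_add_of_nat_ratio_1:
  fixes a c :: complex
  assumes "\<And>n. a + of_nat n \<noteq> 0"
  shows "(\<lambda>n. (c + of_nat n) / (a + of_nat n)) \<longlonglongrightarrow> 1"
proof -
  have "filterlim (\<lambda>n. a + of_nat n) at_infinity sequentially"
    by (rule tendsto_add_filterlim_at_infinity[OF tendsto_const tendsto_of_nat])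
  then have "(\<lambda>n. 1 + (c - a) / (a + of_nat n)) \<longlonglongrightarrow> 1 + 0"
    by (intro tendsto_add tendsto_const tendsto_divide_0[OF tendsto_const])
  moreover have "(c + of_nat n) / (a + of_nat n) = 1 + (c - a) / (a + of_nat n)" for n
    using assms[of n] by (simp add: field_simps)
  ultimately show ?thesis by simp
qed

lemma hyp_fps_conv_radius:
  assumes a: "a \<notin> \<int>" and b: "b \<notin> \<int>" and c: "c \<notin> \<int>"
  shows "fps_conv_radius (hyp_fps a b c) = 1"
  unfolding fps_conv_radius_def
proof (rule conv_radius_ratio_limit_nonzero[of _ 1])
  define f where "f = fps_nth (hyp_fps a b c)"
  have nz: "a + of_nat n \<noteq> 0" "b + of_nat n \<noteq> 0" "c + of_nat n \<noteq> 0" "of_nat n + (1::complex) \<noteq> 0" for n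
    using a b c by (simp_all add: not_Ints_add_of_nat_nonzero of_nat_plus_1_nonzero)
  have "f n \<noteq> 0" for n
    using pochhammer_nonzero_if_not_Ints a b c by (simp add: f_def fps_nth_hyp_fps)
  moreover have "t / (t * A / D) = D / A" if "t \<noteq> 0" "A \<noteq> 0" "D \<noteq> 0" for t A D :: complex
    using that by (simp add: field_simps)
  ultimately have "f n / f (Suc n) = (c + of_nat n) / (a + of_nat n) * ((1 + of_nat n) / (b + of_nat n))" for n
    using nz[of n] unfolding f_def hyp_fps_nth_Suc[OF c] by (simp add: add.commute)
  then have "norm (f n) / norm (f (Suc n)) = norm ((c + of_nat n) / (a + of_nat n) * ((1 + of_nat n) / (b + of_nat n)))" for n
    by (simp flip: norm_divide)
  moreover have "(\<lambda>n. norm ((c + of_nat n) / (a + of_nat n) * ((1 + of_nat n) / (b + of_nat n)))) \<longlonglongrightarrow> norm ((1::complex) * 1)"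
    by (intro tendsto_norm tendsto_mult tendsto_add_of_nat_ratio_1 nz)
  ultimately show "(\<lambda>n. norm (f n) / norm (f (Suc n))) \<longlonglongrightarrow> 1"
    by simp
qed simp_all

lemma hyp_fps_conv_radius_ge_1: "hyp_nondegenerate a b c \<Longrightarrow> 1 \<le> fps_conv_radius (hyp_fps a b c)"
  by (simp add: hyp_nondegenerate_def hyp_fps_conv_radius)

lemma continuous_on_eq_0_off_finite:
  fixes f :: "complex \<Rightarrow> complex"
  assumes "continuous_on S f" "open S" "finite Z" "\<And>y. y \<in> S - Z \<Longrightarrow> f y = 0" "x \<in> S"
  shows "f x = 0"
proof -
  have "open (S - (Z - {x}))" using assms(2,3) by (intro open_Diff finite_imp_closed) auto
  then have "eventually (\<lambda>y. y \<in> S - (Z - {x}) - {x}) (at x)"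
    by (rule eventually_at_in_open) (use assms(5) in auto)
  then have "eventually (\<lambda>y. f y = 0) (at x)"
    by eventually_elim (use assms(4) in auto)
  then have "(f \<longlongrightarrow> 0) (at x)" by (rule tendsto_eventually)
  moreover have "(f \<longlongrightarrow> f x) (at x)"
    using assms(1,2,5) continuous_on_eq_continuous_at isCont_def by blast
  ultimately show ?thesis using tendsto_unique[of "at x"] by simp
qed

lemma ereal_norm_less_if_ge_1: "norm x < 1 \<Longrightarrow> 1 \<le> (R::ereal) \<Longrightarrow> ereal (norm x) < R"
  by (metis ereal_less(3) less_le_trans one_ereal_def)

lemma fps_eq_0_if_eval_eq_0_off_finite:
  fixes G :: "complex fps"
  assumes G: "1 \<le> fps_conv_radius G" and Z: "finite Z"
    and eval: "\<And>x. norm x < 1 \<Longrightarrow> x \<notin> Z \<Longrightarrow> eval_fps G x = 0"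
  shows "G = 0"
proof (rule eval_fps_eqD)
  have "ball (0::complex) 1 \<subseteq> eball 0 (fps_conv_radius G)"
  proof
    fix x :: complex
    assume "x \<in> ball 0 1"
    then show "x \<in> eball 0 (fps_conv_radius G)"
      using ereal_norm_less_if_ge_1[OF _ G, of x] by simp
  qed
  then have "continuous_on (ball 0 1) (eval_fps G)"
    using continuous_on_eval_fps continuous_on_subset by blast
  then have "eval_fps G x = 0" if "norm x < 1" for x
    by (rule continuous_on_eq_0_off_finite[OF _ open_ball Z]) (use eval that in auto)
  moreover have "eventually (\<lambda>x. x \<in> ball 0 1) (nhds (0::complex))"
    by (rule eventually_nhds_in_open) auto
  ultimately show "eventually (\<lambda>x. eval_fps G x = eval_fps 0 x) (nhds 0)"
    by (auto elim: eventually_mono)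
  show "0 < fps_conv_radius G" using G by (simp add: less_le_trans[of _ 1])
qed simp

lemma conv_radius_fp_mult_ge_1: "1 \<le> fps_conv_radius H \<Longrightarrow> 1 \<le> fps_conv_radius (fp p * H)"
  using fps_conv_radius_mult[of "fp p" H] by simp

lemma conv_radius_add_ge_1:
  fixes F H :: "complex fps"
  assumes "1 \<le> fps_conv_radius F" "1 \<le> fps_conv_radius H"
  shows "1 \<le> fps_conv_radius (F + H)" "1 \<le> fps_conv_radius (F - H)"
  using assms fps_conv_radius_add[of F H] fps_conv_radius_diff[of F H]
  by (metis min.bounded_iff order_trans)+

lemma eval_fps_poly_combination:
  assumes x: "norm x < 1" and rad: "1 \<le> fps_conv_radius A" "1 \<le> fps_conv_radius B" "1 \<le> fps_conv_radius C"
  shows "eval_fps (fp d * A - (fp q * B + fp r * C)) x =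
           poly d x * eval_fps A x - (poly q x * eval_fps B x + poly r x * eval_fps C x)"
proof -
  note lt = ereal_norm_less_if_ge_1[OF x]
  have mult: "eval_fps (fp p * H) x = poly p x * eval_fps H x" if "1 \<le> fps_conv_radius H" for p H
    using that by (subst eval_fps_mult) (simp_all add: lt)
  show ?thesis
    using rad by (simp add: eval_fps_diff eval_fps_add lt mult conv_radius_fp_mult_ge_1 conv_radius_add_ge_1)
qed

section \<open>The contiguity decomposition\<close>

lemma Fract_rf_num_rf_den: "Fract (rf_num r) (rf_den r) = r"
  by (simp add: rf_num_def rf_den_def)

lemma rf_den_nonzero: "rf_den r \<noteq> 0"
  by (simp add: rf_den_def)

lemma rf_num_Fract_mult:
  assumes "d \<noteq> 0"
  shows "rf_num (Fract q d) * d = q * rf_den (Fract q d)"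
proof -
  have "Fract (rf_num (Fract q d)) (rf_den (Fract q d)) = Fract q d"
    by (rule Fract_rf_num_rf_den)
  then show ?thesis
    using eq_fract(1)[OF rf_den_nonzero assms] by simp
qed

lemma fps_combination_Fract_iff:
  fixes A B C :: "complex fps"
  assumes d: "d \<noteq> 0"
  shows "fp (rf_den (Fract q d) * rf_den (Fract r d)) * A =
           fp (rf_num (Fract q d) * rf_den (Fract r d)) * B + fp (rf_num (Fract r d) * rf_den (Fract q d)) * C
         \<longleftrightarrow> fp d * A = fp q * B + fp r * C"
proof -
  define nQ dQ nR dR where "nQ = rf_num (Fract q d)" and "dQ = rf_den (Fract q d)"
    and "nR = rf_num (Fract r d)" and "dR = rf_den (Fract r d)"
  have eQ: "nQ * d = q * dQ" and eR: "nR * d = r * dR"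
    unfolding nQ_def dQ_def nR_def dR_def using rf_num_Fract_mult[OF d] by simp_all
  have "fp d * (fp (dQ * dR) * A - (fp (nQ * dR) * B + fp (nR * dQ) * C))
      = fp (dQ * dR) * (fp d * A) - (fp (nQ * d) * fp dR * B + fp (nR * d) * fp dQ * C)"
    by (simp add: fps_of_poly_mult algebra_simps)
  also have "\<dots> = fp (dQ * dR) * (fp d * A - (fp q * B + fp r * C))"
    unfolding eQ eR by (simp add: fps_of_poly_mult algebra_simps)
  finally have "fp d * (fp (dQ * dR) * A - (fp (nQ * dR) * B + fp (nR * dQ) * C))
      = fp (dQ * dR) * (fp d * A - (fp q * B + fp r * C))" .
  moreover have "fp (dQ * dR) \<noteq> 0" "fp d \<noteq> 0"
    using d by (simp_all add: dQ_def dR_def rf_den_nonzero fp_eq_0_iff)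
  ultimately have "fp (dQ * dR) * A = fp (nQ * dR) * B + fp (nR * dQ) * C \<longleftrightarrow> fp d * A = fp q * B + fp r * C"
    by (metis mult_eq_0_iff right_minus_eq)
  then show ?thesis by (simp only: nQ_def dQ_def nR_def dR_def)
qed

lemma is_contig_decomp_iff_fps:
  fixes a b c :: complex and k l m :: int
  defines "Hk \<equiv> hyp_fps (a + of_int k) (b + of_int l) (c + of_int m)"
    and "H1 \<equiv> hyp_fps (a+1) (b+1) (c+1)" and "H0 \<equiv> hyp_fps a b c"
  assumes nd: "hyp_nondegenerate a b c"
  shows "is_contig_decomp k l m a b c (Q, R) \<longleftrightarrow>
           fp (rf_den Q * rf_den R) * Hk = fp (rf_num Q * rf_den R) * H1 + fp (rf_num R * rf_den Q) * H0"
proof -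
  define nQ dQ nR dR where "nQ = rf_num Q" and "dQ = rf_den Q" and "nR = rf_num R" and "dR = rf_den R"
  define G where "G = fp (dQ * dR) * Hk - (fp (nQ * dR) * H1 + fp (nR * dQ) * H0)"
  have rad: "1 \<le> fps_conv_radius Hk" "1 \<le> fps_conv_radius H1" "1 \<le> fps_conv_radius H0"
    unfolding Hk_def H1_def H0_def using hyp_nondegenerate_shift[OF nd, of k l m]
      hyp_nondegenerate_shift[OF nd, of 1 1 1] nd
    by (simp_all add: hyp_fps_conv_radius_ge_1)
  have rad_G: "1 \<le> fps_conv_radius G"
    unfolding G_def by (intro conv_radius_add_ge_1 conv_radius_fp_mult_ge_1 rad)
  have pointwise: "hyp2f1 (a + of_int k) (b + of_int l) (c + of_int m) x =
        rf_eval Q x * hyp2f1 (a + 1) (b + 1) (c + 1) x + rf_eval R x * hyp2f1 a b c x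
      \<longleftrightarrow> eval_fps G x = 0"
    if "norm x < 1" "poly dQ x \<noteq> 0" "poly dR x \<noteq> 0" for x
  proof -
    have "eval_fps G x = poly dQ x * poly dR x * (eval_fps Hk x -
        (poly nQ x / poly dQ x * eval_fps H1 x + poly nR x / poly dR x * eval_fps H0 x))"
      using eval_fps_poly_combination[OF that(1) rad, of "dQ * dR" "nQ * dR" "nR * dQ", folded G_def] that(2,3)
      by (simp add: field_simps)
    then show ?thesis
      using that(2,3) unfolding hyp2f1_eq_eval_fps rf_eval_def Hk_def H1_def H0_def nQ_def dQ_def nR_def dR_def
      by simp
  qed
  have "is_contig_decomp k l m a b c (Q, R) \<longleftrightarrow> G = 0"
  proof
    assume decomp: "is_contig_decomp k l m a b c (Q, R)"
    have fin: "finite {x. poly (dQ * dR) x = 0}"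
      by (rule poly_roots_finite) (simp add: dQ_def dR_def rf_den_nonzero)
    show "G = 0"
    proof (rule fps_eq_0_if_eval_eq_0_off_finite[OF rad_G fin])
      fix x :: complex
      assume "norm x < 1" "x \<notin> {x. poly (dQ * dR) x = 0}"
      then show "eval_fps G x = 0"
        using decomp pointwise unfolding is_contig_decomp_def dQ_def dR_def by auto
    qed
  next
    assume "G = 0"
    then show "is_contig_decomp k l m a b c (Q, R)"
      using pointwise unfolding is_contig_decomp_def dQ_def dR_def by auto
  qed
  then show ?thesis by (simp add: G_def nQ_def dQ_def nR_def dR_def)
qed

lemma is_contig_decomp_Fract_iff:
  assumes "hyp_nondegenerate a b c" "d \<noteq> 0"
  shows "is_contig_decomp k l m a b c (Fract q d, Fract r d) \<longleftrightarrow>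
           fp d * hyp_fps (a + of_int k) (b + of_int l) (c + of_int m) =
             fp q * hyp_fps (a+1) (b+1) (c+1) + fp r * hyp_fps a b c"
  using is_contig_decomp_iff_fps[OF assms(1)] fps_combination_Fract_iff[OF assms(2)] by simp

lemma hyp_fps_contiguous_independent:
  assumes nd: "hyp_nondegenerate a b c"
    and h: "fp u * hyp_fps (a+1) (b+1) (c+1) + fp v * hyp_fps a b c = 0"
  shows "u = 0 \<and> v = 0"
proof -
  have nz: "a * b \<noteq> 0" "c \<noteq> 0" using nd by (auto simp: hyp_nondegenerate_def)
  have "hyp_fps (a+1) (b+1) (c+1) = fp [:c/(a*b):] * fps_deriv (hyp_fps a b c)"
    using nz by (simp add: hyp_fps_deriv fp_const flip: mult.assoc fps_const_mult)
  then have "fp (smult (c/(a*b)) u) * fps_deriv (hyp_fps a b c) + fp v * hyp_fps a b c = 0"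
    using h by (simp add: fps_of_poly_smult fp_const mult_ac)
  then show ?thesis
    using hyp_fps_deriv_independent[OF nd] nz by fastforce
qed

lemma ratfun_pair_common_denominator:
  fixes Q R :: ratfun
  shows "\<exists>d q r. d \<noteq> 0 \<and> Q = Fract q d \<and> R = Fract r d"
proof (intro exI conjI)
  define dQ dR where "dQ = rf_den Q" and "dR = rf_den R"
  have nz: "dQ \<noteq> 0" "dR \<noteq> 0" by (simp_all add: dQ_def dR_def rf_den_nonzero)
  then show "dQ * dR \<noteq> 0" by simp
  show "Q = Fract (dR * rf_num Q) (dQ * dR)" "R = Fract (dQ * rf_num R) (dQ * dR)"
    using mult_fract_cancel[OF nz(2), of "rf_num Q" dQ] mult_fract_cancel[OF nz(1), of "rf_num R" dR]
    by (simp_all add: dQ_def dR_def Fract_rf_num_rf_den mult.commute)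
qed

lemma is_contig_decomp_unique:
  assumes nd: "hyp_nondegenerate a b c"
    and "is_contig_decomp k l m a b c QR1" "is_contig_decomp k l m a b c QR2"
  shows "QR1 = QR2"
proof -
  obtain d1 q1 r1 d2 q2 r2 where d: "d1 \<noteq> 0" "d2 \<noteq> 0"
    and QR: "QR1 = (Fract q1 d1, Fract r1 d1)" "QR2 = (Fract q2 d2, Fract r2 d2)"
    using ratfun_pair_common_denominator by (metis prod.collapse)
  define Hk H1 H0 where "Hk = hyp_fps (a + of_int k) (b + of_int l) (c + of_int m)"
    and "H1 = hyp_fps (a+1) (b+1) (c+1)" and "H0 = hyp_fps a b c"
  have E: "fp d1 * Hk = fp q1 * H1 + fp r1 * H0" "fp d2 * Hk = fp q2 * H1 + fp r2 * H0"
    using assms(2,3) is_contig_decomp_Fract_iff[OF nd] d unfolding QR Hk_def H1_def H0_def by simp_all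
  have "fp (d2 * q1 - d1 * q2) * H1 + fp (d2 * r1 - d1 * r2) * H0 = fp d2 * (fp d1 * Hk) - fp d1 * (fp d2 * Hk)"
    unfolding E by (simp add: fps_of_poly_mult fps_of_poly_diff algebra_simps)
  then have "fp (d2 * q1 - d1 * q2) * H1 + fp (d2 * r1 - d1 * r2) * H0 = 0"
    by (simp add: algebra_simps)
  then have "d2 * q1 - d1 * q2 = 0 \<and> d2 * r1 - d1 * r2 = 0"
    unfolding H1_def H0_def by (rule hyp_fps_contiguous_independent[OF nd])
  then have "q1 * d2 = q2 * d1" "r1 * d2 = r2 * d1"
    by (simp_all add: mult.commute)
  then show ?thesis
    using d by (simp add: QR eq_fract)
qed

lemma contig_eq_Fract:
  assumes nd: "hyp_nondegenerate a b c" and d: "d \<noteq> 0"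
    and E: "fp d * hyp_fps (a + of_int k) (b + of_int l) (c + of_int m) =
              fp q * hyp_fps (a+1) (b+1) (c+1) + fp r * hyp_fps a b c"
  shows "contigQ k l m a b c = Fract q d" "contigR k l m a b c = Fract r d"
proof -
  have "(THE QR. is_contig_decomp k l m a b c QR) = (Fract q d, Fract r d)"
    using is_contig_decomp_Fract_iff[OF nd d] E is_contig_decomp_unique[OF nd]
    by (intro the_equality) auto
  then show "contigQ k l m a b c = Fract q d" "contigR k l m a b c = Fract r d"
    by (simp_all add: contigQ_def contigR_def)
qed

lemma contig_decomp_exists:
  assumes nd: "hyp_nondegenerate a b c"
  shows "\<exists>d q r. d \<noteq> 0 \<and> fp d * hyp_fps (a + of_int k) (b + of_int l) (c + of_int m) =
                            fp q * hyp_fps (a+1) (b+1) (c+1) + fp r * hyp_fps a b c"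
proof -
  obtain d q r where "d \<noteq> 0"
    and "fp d * hyp_fps (a + of_int k) (b + of_int l) (c + of_int m) =
           fp q * fps_deriv (hyp_fps a b c) + fp r * hyp_fps a b c"
    using rat_span_hyp_fps_shift[OF nd] unfolding rat_span_def by blast
  moreover have "fp q * fps_deriv (hyp_fps a b c) = fp (q * [:a*b/c:]) * hyp_fps (a+1) (b+1) (c+1)"
    by (simp add: hyp_fps_deriv fps_of_poly_mult fp_const mult.assoc)
  ultimately show ?thesis by metis
qed

text \<open>The hypergeometric equation, with \<open>F'\<close> and \<open>F''\<close> expressed through
  \<open>F(a+1,b+1,c+1)\<close> and \<open>F(a+2,b+2,c+2)\<close>.\<close>
lemma hyp_fps_three_term:
  assumes nd: "hyp_nondegenerate a b c"
  shows "fp ([:(a+1)*(b+1):] * [:0,1,-1:]) * hyp_fps (a+2) (b+2) (c+2)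
           = fp ([:c+1:] * [:-c, a+b+1:]) * hyp_fps (a+1) (b+1) (c+1) + fp [:c*(c+1):] * hyp_fps a b c"
proof -
  have nz: "a * b \<noteq> 0" "c \<noteq> 0" "c + 1 \<noteq> 0"
    using nd by (auto simp: hyp_nondegenerate_def add_eq_0_iff2)
  define K where "K = (a+1)*(b+1)"
  have "fp [:0,1,-1:] * (fps_const (a*b/c) * (fps_const (K/(c+1)) * hyp_fps (a+2) (b+2) (c+2)))
      = fp [:-c, a+b+1:] * (fps_const (a*b/c) * hyp_fps (a+1) (b+1) (c+1)) + fps_const (a*b) * hyp_fps a b c"
    using hyp_fps_ode[of c a b] nd unfolding hyp_fps_deriv fps_deriv_mult_const_left
    by (simp add: hyp_nondegenerate_def fp_const K_def add.assoc one_add_one)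
  then have "fps_const (c*(c+1)/(a*b)) * (fp [:0,1,-1:] * (fps_const (a*b/c) * (fps_const (K/(c+1)) * hyp_fps (a+2) (b+2) (c+2))))
      = fps_const (c*(c+1)/(a*b)) * (fp [:-c, a+b+1:] * (fps_const (a*b/c) * hyp_fps (a+1) (b+1) (c+1)) + fps_const (a*b) * hyp_fps a b c)"
    by simp
  then have "fp [:0,1,-1:] * fps_const (c*(c+1)/(a*b) * (a*b/c) * (K/(c+1))) * hyp_fps (a+2) (b+2) (c+2)
      = fp [:-c, a+b+1:] * fps_const (c*(c+1)/(a*b) * (a*b/c)) * hyp_fps (a+1) (b+1) (c+1)
        + fps_const (c*(c+1)/(a*b) * (a*b)) * hyp_fps a b c"
    by (simp only: fps_const_mult[symmetric] algebra_simps)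
  moreover have "c*(c+1)/(a*b) * (a*b/c) * (K/(c+1)) = K" "c*(c+1)/(a*b) * (a*b/c) = c + 1"
    "c*(c+1)/(a*b) * (a*b) = c*(c+1)"
    using nz by (simp_all add: field_simps)
  ultimately show ?thesis
    unfolding fps_of_poly_mult fp_const by (simp add: K_def mult_ac)
qed

lemma contigR_of_shifted_decomp:
  assumes nd: "hyp_nondegenerate a b c" and d: "d \<noteq> 0"
    and E: "fp d * hyp_fps (a + of_int k) (b + of_int l) (c + of_int m)
              = fp q * hyp_fps (a+2) (b+2) (c+2) + fp r * hyp_fps (a+1) (b+1) (c+1)"
  shows "contigR k l m a b c = Fract [:c * (c + 1) / ((a + 1) * (b + 1)):] [:0, 1, -1:] * Fract q d"
proof -
  define K px where "K = (a+1)*(b+1)" and "px = [:0,1,-1::complex:]"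
  define P2 P1 P0 where "P2 = [:K:] * px" and "P1 = [:c+1:] * [:-c, a+b+1:]" and "P0 = [:c*(c+1):]"
  have K: "K \<noteq> 0"
    using nd by (auto simp: K_def hyp_nondegenerate_def add_eq_0_iff2)
  then have "P2 \<noteq> 0" by (simp add: P2_def px_def)
  then have P2: "P2 * d \<noteq> 0" using d by simp
  have three: "fp P2 * hyp_fps (a+2) (b+2) (c+2) = fp P1 * hyp_fps (a+1) (b+1) (c+1) + fp P0 * hyp_fps a b c"
    unfolding P2_def P1_def P0_def px_def K_def by (rule hyp_fps_three_term[OF nd])
  have "fp (P2 * d) * hyp_fps (a + of_int k) (b + of_int l) (c + of_int m)
      = fp q * (fp P2 * hyp_fps (a+2) (b+2) (c+2)) + fp (P2 * r) * hyp_fps (a+1) (b+1) (c+1)"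
    using arg_cong[OF E, of "\<lambda>G. fp P2 * G"] by (simp add: fps_of_poly_mult algebra_simps)
  also have "\<dots> = fp (q * P1 + P2 * r) * hyp_fps (a+1) (b+1) (c+1) + fp (q * P0) * hyp_fps a b c"
    unfolding three by (simp add: fps_of_poly_mult fps_of_poly_add algebra_simps)
  finally have "contigR k l m a b c = Fract (q * P0) (P2 * d)"
    using contig_eq_Fract(2)[OF nd P2] by blast
  also have "\<dots> = Fract ([:K:] * ([:c * (c+1) / K:] * q)) ([:K:] * (px * d))"
    using K by (simp add: P2_def P0_def mult_ac)
  also have "\<dots> = Fract [:c * (c+1) / K:] px * Fract q d"
    by (subst mult_fract_cancel) (use K in simp_all)
  finally show ?thesis unfolding px_def K_def .
qed

theorem proposition1p3:
  fixes a b c :: complex and k l m :: int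
  assumes "standing a b c"
  shows "contigR k l m a b c =
           Fract [:c * (c + 1) / ((a + 1) * (b + 1)):] [:0, 1, -1:]
           * contigQ (k - 1) (l - 1) (m - 1) (a + 1) (b + 1) (c + 1)"
proof -
  have nd: "hyp_nondegenerate a b c"
    using assms by (rule standing_imp_hyp_nondegenerate)
  have nd1: "hyp_nondegenerate (a+1) (b+1) (c+1)"
    using hyp_nondegenerate_shift[OF nd, of 1 1 1] by simp
  have shift: "x + 1 + of_int (i - 1) = x + of_int i" "x + 1 + 1 = x + 2" for x :: complex and i
    by simp_all
  obtain d q r where d: "d \<noteq> 0" and E: "fp d * hyp_fps (a + of_int k) (b + of_int l) (c + of_int m)
      = fp q * hyp_fps (a+2) (b+2) (c+2) + fp r * hyp_fps (a+1) (b+1) (c+1)"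
    using contig_decomp_exists[OF nd1, of "k-1" "l-1" "m-1"] unfolding shift by blast
  have "contigQ (k-1) (l-1) (m-1) (a+1) (b+1) (c+1) = Fract q d"
    using contig_eq_Fract(1)[OF nd1 d, of "k-1" "l-1" "m-1"] E unfolding shift by blast
  then show ?thesis
    using contigR_of_shifted_decomp[OF nd d E] by simp
qed

end
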